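(* Let $\beta\in(0,1)$, $z>0$, $c>0$, $\delta\in(0,1)$, and let $N$ and $\Delta$ be positive integers. Let $F$ be a continuous cumulative distribution function with support $[\underline{w},\overline{w}]$, $\underline{w}<\overline{w}$, and mean $\mu_w$, and assume $\underline{w}<(1-\beta)z+\beta\mu_w$ and $z+c<\overline{w}$. Put $\Upsilon(x)=\int_{\underline{w}}^{x}x\,dF(w)+\int_{x}^{\overline{w}}w\,dF(w)$. Let $w_R(0)$ be the unique solution in $[\underline{w},\overline{w}]$ of $x=z(1-\beta)+\beta\Upsilon(x)$ and $w_R(n)=(z+c)(1-\beta)+\beta\Upsilon(w_R(n-1))$ for $n\ge1$. Let $w_R^\delta(0)=w_R^{\delta,\Delta}(0)$ be the unique solution in $[\underline{w},\overline{w}]$ of $x=z(1-\beta)+\beta\delta\Upsilon(w_R(\Delta))+\beta(1-\delta)\Upsilon(x)$, and for $n=1,\dots,N$ let $w_R^{\delta}(n)=w_R^{\delta,\Delta}(n)=(z+c)(1-\beta)+\beta\delta\Upsilon(w_R(n-1+\Delta))+\beta(1-\delta)\Upsilon(w_R^\delta(n-1))$. Then for each $n\in\{0,\dots,N\}$: (i) for fixed $\Delta$, $w_R^{\delta,\Delta}(n)$ is strictly increasing in $\delta$; (ii) for fixed $\delta$, $w_R^{\delta,\Delta}(n)$ is strictly increasing in $\Delta$ over the positive integers.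
   Context: Interpretation: $w_R(n)$ are the reservation wages of a risk-neutral job searcher (discount factor $\beta$, one i.i.d. offer per period from $F$, jobs kept forever, flow income $z+c$ while unemployed with $n\ge1$ remaining periods of unemployment benefits and $z$ when $n=0$) with no possibility of benefit extension; $w_R^{\delta}(n)$ are the reservation wages when, before any extension has occurred, benefits are extended (once) by $\Delta$ periods with probability $\delta$ between offers. $\delta$ and $\Delta$ represent the worker's beliefs about the probability and the length of an extension; the claim says the worker is more selective when believing an extension more likely or longer. *)

theory Defs
  imports "HOL-Probability.Probability"
begin

definition Upsilon :: "real measure \<Rightarrow> real \<Rightarrow> real \<Rightarrow> real \<Rightarrow> real" where
  "Upsilon M wl wh x = (LINT w:{wl..x}|M. x) + (LINT w:{x..wh}|M. w)"

fun wR :: "real measure \<Rightarrow> real \<Rightarrow> real \<Rightarrow> real \<Rightarrow> real \<Rightarrow> real \<Rightarrow> nat \<Rightarrow> real" where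
  "wR M wl wh \<beta> z c 0 =
     (THE x. x \<in> {wl..wh} \<and> x = z * (1 - \<beta>) + \<beta> * Upsilon M wl wh x)"
| "wR M wl wh \<beta> z c (Suc n) =
     (z + c) * (1 - \<beta>) + \<beta> * Upsilon M wl wh (wR M wl wh \<beta> z c n)"

fun wRd :: "real measure \<Rightarrow> real \<Rightarrow> real \<Rightarrow> real \<Rightarrow> real \<Rightarrow> real \<Rightarrow> real \<Rightarrow> nat \<Rightarrow> nat \<Rightarrow> real" where
  "wRd M wl wh \<beta> z c \<delta> \<Delta> 0 =
     (THE x. x \<in> {wl..wh} \<and>
        x = z * (1 - \<beta>) + \<beta> * \<delta> * Upsilon M wl wh (wR M wl wh \<beta> z c \<Delta>)
            + \<beta> * (1 - \<delta>) * Upsilon M wl wh x)"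
| "wRd M wl wh \<beta> z c \<delta> \<Delta> (Suc n) =
     (z + c) * (1 - \<beta>) + \<beta> * \<delta> * Upsilon M wl wh (wR M wl wh \<beta> z c (n + \<Delta>))
       + \<beta> * (1 - \<delta>) * Upsilon M wl wh (wRd M wl wh \<beta> z c \<delta> \<Delta> n)"

end

(*
  Since F has no atoms and is supported on [wl, wh], Upsilon x is the expectation of max x w.
  On [wl, wh] this is strictly increasing, 1-Lipschitz, and fixes wh, so for 0 <= g < 1 the
  map x -> x - g * Upsilon x is strictly increasing. Hence each equation x = K + g * Upsilon x
  has a unique solution in [wl, wh], and the solution strictly increases with K.
  The sequence w_R(n) is strictly increasing. An extension therefore replaces the continuation
  value Upsilon (w_R^delta(n - 1)) by the larger Upsilon (w_R(n - 1 + Delta)), and this value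
  grows with Delta. Induction on n, using the fixed-point comparison at n = 0, then gives strict
  monotonicity in delta and in Delta.
*)

theory Submission
  imports Defs
begin

lemma strict_mono_on_diff_scaled_lipschitz:
  fixes U :: "real \<Rightarrow> real"
  assumes U: "1-lipschitz_on S U" and \<gamma>: "0 \<le> \<gamma>" "\<gamma> < 1"
  shows "strict_mono_on S (\<lambda>x. x - \<gamma> * U x)"
proof (rule strict_mono_onI)
  fix x y assume "x \<in> S" "y \<in> S" "x < y"
  then have "U y - U x \<le> y - x"
    using lipschitz_onD[OF U, of y x] by (simp add: dist_real_def abs_le_iff)
  then have "\<gamma> * (U y - U x) \<le> \<gamma> * (y - x)"
    using \<gamma> by (intro mult_left_mono)
  also have "\<dots> < y - x"
    using \<gamma> \<open>x < y\<close> by simp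
  finally have "\<gamma> * (U y - U x) < y - x" .
  then show "x - \<gamma> * U x < y - \<gamma> * U y"
    by (simp add: algebra_simps)
qed

lemma ex1_fixed_point_contraction:
  fixes U :: "real \<Rightarrow> real"
  assumes U: "1-lipschitz_on {a..b} U" and \<gamma>: "0 \<le> \<gamma>" "\<gamma> < 1" and "a \<le> b"
    and a: "a \<le> K + \<gamma> * U a" and b: "K + \<gamma> * U b \<le> b"
  shows "\<exists>!x. x \<in> {a..b} \<and> x = K + \<gamma> * U x"
proof -
  let ?g = "\<lambda>x. x - \<gamma> * U x"
  have g: "strict_mono_on {a..b} ?g"
    using strict_mono_on_diff_scaled_lipschitz[OF U \<gamma>] .
  have "continuous_on {a..b} ?g"
    using lipschitz_on_continuous_on[OF U] by (intro continuous_intros)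
  then have "\<exists>x\<ge>a. x \<le> b \<and> ?g x = K"
    using a b \<open>a \<le> b\<close> by (intro IVT') (simp_all add: algebra_simps)
  then obtain x where x: "x \<in> {a..b}" "?g x = K"
    by auto
  have "y = x" if "y \<in> {a..b}" "?g y = K" for y
    using strict_mono_on_eqD[OF g, of y x] that x by simp
  moreover have "y = K + \<gamma> * U y \<longleftrightarrow> ?g y = K" for y
    by (rule iffI; linarith)
  ultimately show ?thesis
    using x by blast
qed

lemma
  fixes f :: "nat \<Rightarrow> 'a::order"
  assumes step: "\<And>n. f (Suc n) = T (f n)"
    and T: "strict_mono_on S T" "T ` S \<subseteq> S" and "f 0 \<in> S" "f 0 < f 1"
  shows strict_mono_orbit: "strict_mono f" and orbit_in_set: "f n \<in> S"
proof -
  have *: "f n \<in> S \<and> f n < f (Suc n)" for n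
  proof (induction n)
    case 0
    then show ?case using assms by simp
  next
    case (Suc n)
    then have "f (Suc n) \<in> S"
      using T(2) step by auto
    moreover have "f (Suc n) < f (Suc (Suc n))"
      using Suc strict_mono_onD[OF T(1), of "f n" "f (Suc n)"] calculation step by simp
    ultimately show ?case ..
  qed
  then show "strict_mono f"
    by (simp add: strict_mono_Suc_iff)
  show "f n \<in> S"
    using * by blast
qed

locale real_distribution_on = real_distribution +
  fixes wl wh :: real
  assumes support: "x \<in> {wl..wh} \<longleftrightarrow> (\<forall>e>0. measure M {x - e<..<x + e} > 0)"
begin

lemma AE_in_support: "AE w in M. w \<in> {wl..wh}"
proof -
  define \<F> where "\<F> = {T. open T \<and> T \<in> null_sets M}"
  obtain \<F>' where \<F>': "\<F>' \<subseteq> \<F>" "countable \<F>'" "\<Union>\<F>' = \<Union>\<F>"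
    using Lindelof[of \<F>] by (auto simp: \<F>_def)
  have "\<Union>\<F>' \<in> null_sets M"
    using null_sets_UN'[of \<F>' id M] \<F>' by (auto simp: \<F>_def)
  moreover have "- {wl..wh} \<subseteq> \<Union>\<F>"
  proof
    fix x assume "x \<in> - {wl..wh}"
    then obtain e where "e > 0" and "\<not> measure M {x - e<..<x + e} > 0"
      using support[of x] by auto
    then have "e > 0" and "measure M {x - e<..<x + e} = 0"
      using measure_nonneg[of M "{x - e<..<x + e}"] by simp_all
    then have "{x - e<..<x + e} \<in> \<F>"
      unfolding \<F>_def by (auto intro: null_setsI simp: emeasure_eq_measure)
    then show "x \<in> \<Union>\<F>"
      using \<open>e > 0\<close> by (intro UnionI[of "{x - e<..<x + e}"]) auto
  qed
  ultimately show ?thesis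
    by (intro AE_I'[of "\<Union>\<F>'"]) (use \<F>' in auto)
qed

lemma integrable_max_const: "integrable M (\<lambda>w. max x w)"
proof (rule integrable_const_bound)
  show "AE w in M. norm (max x w) \<le> \<bar>x\<bar> + \<bar>wl\<bar> + \<bar>wh\<bar>"
    using AE_in_support by eventually_elim auto
qed measurable

lemma Upsilon_eq_expectation_max:
  assumes "measure M {x} = 0"
  shows "Upsilon M wl wh x = expectation (\<lambda>w. max x w)"
proof -
  \<comment> \<open>The two integration ranges of Upsilon share the point x.\<close>
  have "{x} \<in> null_sets M"
    using assms by (simp add: null_sets_def emeasure_eq_measure)
  from AE_not_in[OF this] AE_in_support
  have "AE w in M. max x w = indicator {wl..x} w * x + indicator {x..wh} w * w"
    by eventually_elim (auto simp: indicator_def max_def)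
  then have "expectation (\<lambda>w. max x w)
      = expectation (\<lambda>w. indicator {wl..x} w * x + indicator {x..wh} w * w)"
    by (intro integral_cong_AE) auto
  also have "\<dots> = expectation (\<lambda>w. indicator {wl..x} w * x) + expectation (\<lambda>w. indicator {x..wh} w * w)"
  proof (intro Bochner_Integration.integral_add)
    show "integrable M (\<lambda>w. indicator {wl..x} w * x)"
      by (intro integrable_mult_left integrable_real_indicator) (auto simp: less_top[symmetric])
    show "integrable M (\<lambda>w. indicator {x..wh} w * w)"
      by (rule integrable_const_bound[where B = "\<bar>x\<bar> + \<bar>wh\<bar>"])
        (auto simp: indicator_def)
  qed
  finally show ?thesis
    by (simp add: Upsilon_def set_lebesgue_integral_def)
qed

lemma lipschitz_expectation_max: "1-lipschitz_on UNIV (\<lambda>x. expectation (\<lambda>w. max x w))"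
proof (rule lipschitz_onI)
  fix x y :: real
  have "dist (expectation (\<lambda>w. max x w)) (expectation (\<lambda>w. max y w))
      = \<bar>expectation (\<lambda>w. max x w - max y w)\<bar>"
    using integrable_max_const by (simp add: dist_real_def)
  also have "\<dots> \<le> expectation (\<lambda>w. \<bar>max x w - max y w\<bar>)"
    using integral_abs_bound .
  also have "\<dots> \<le> expectation (\<lambda>w. dist x y)"
    using integrable_max_const by (intro integral_mono) (auto simp: dist_real_def)
  finally show "dist (expectation (\<lambda>w. max x w)) (expectation (\<lambda>w. max y w)) \<le> 1 * dist x y"
    using prob_space by simp
qed simp

lemma strict_mono_on_expectation_max:
  "strict_mono_on {wl..wh} (\<lambda>x. expectation (\<lambda>w. max x w))"
proof (rule strict_mono_onI)
  fix x y assume x: "x \<in> {wl..wh}" and y: "y \<in> {wl..wh}" and "x < y"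
  \<comment> \<open>wl is in the support, so F m > 0 for m > wl, and max y w - max x w \<ge> y - m when w \<le> m.\<close>
  define m where "m = (x + y) / 2"
  have m: "x < m" "m < y"
    using \<open>x < y\<close> by (simp_all add: m_def)
  have "\<forall>e>0. measure M {wl - e<..<wl + e} > 0"
    using support[of wl] x y by auto
  moreover have "m - wl > 0"
    using x m by simp
  ultimately have "measure M {wl - (m - wl)<..<wl + (m - wl)} > 0"
    by blast
  also have "\<dots> \<le> prob {..m}"
    by (intro finite_measure_mono) auto
  finally have "0 < prob {..m} * (y - m)"
    using m by simp
  also have "\<dots> = expectation (\<lambda>w. indicator {..m} w * (y - m))"
    by simp
  also have "\<dots> \<le> expectation (\<lambda>w. max y w - max x w)"
  proof (rule integral_mono)
    show "integrable M (\<lambda>w. indicator {..m} w * (y - m))"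
      by (intro integrable_mult_left integrable_real_indicator) (auto simp: less_top[symmetric])
    show "integrable M (\<lambda>w. max y w - max x w)"
      using integrable_max_const by simp
    show "indicator {..m} w * (y - m) \<le> max y w - max x w" for w
      using m by (auto simp: indicator_def max_def)
  qed
  also have "\<dots> = expectation (\<lambda>w. max y w) - expectation (\<lambda>w. max x w)"
    using integrable_max_const by simp
  finally show "expectation (\<lambda>w. max x w) < expectation (\<lambda>w. max y w)"
    by simp
qed

lemma expectation_max_upper: "expectation (\<lambda>w. max wh w) = wh"
proof -
  have "expectation (\<lambda>w. max wh w) = expectation (\<lambda>w. wh)"
    using AE_in_support by (intro integral_cong_AE) auto
  then show ?thesis
    using prob_space by simp
qed

lemma expectation_max_lower: "expectation (\<lambda>w. max wl w) = expectation (\<lambda>w. w)"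
  using AE_in_support by (intro integral_cong_AE) auto

end

locale reservation_wage_model =
  fixes M :: "real measure" and wl wh \<beta> z c :: real
  assumes wl_le_wh: "wl \<le> wh"
    and beta: "0 < \<beta>" "\<beta> < 1"
    and c_pos: "0 < c"
    and Upsilon_strict_mono: "strict_mono_on {wl..wh} (Upsilon M wl wh)"
    and Upsilon_lipschitz: "1-lipschitz_on {wl..wh} (Upsilon M wl wh)"
    and Upsilon_upper: "Upsilon M wl wh wh = wh"
    and low: "wl < (1 - \<beta>) * z + \<beta> * Upsilon M wl wh wl"
    and high: "z + c < wh"
begin

abbreviation "U \<equiv> Upsilon M wl wh"
abbreviation "W \<equiv> wR M wl wh \<beta> z c"
abbreviation "Wd \<equiv> wRd M wl wh \<beta> z c"

lemma Upsilon_bounds: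
  assumes "x \<in> {wl..wh}"
  shows "U wl \<le> U x" "U x \<le> wh"
  using strict_mono_on_leD[OF Upsilon_strict_mono, of wl x]
    strict_mono_on_leD[OF Upsilon_strict_mono, of x wh] assms wl_le_wh Upsilon_upper by auto

lemma income_less_wh: "(z + c) * (1 - \<beta>) + \<beta> * wh < wh"
proof -
  have "(1 - \<beta>) * (z + c) < (1 - \<beta>) * wh"
    using beta high by simp
  then show ?thesis
    by (simp add: algebra_simps)
qed

lemma benefit_flow_pos: "0 < c * (1 - \<beta>)"
  using beta c_pos by simp

lemma strict_mono_on_diff_Upsilon:
  "0 \<le> \<gamma> \<Longrightarrow> \<gamma> < 1 \<Longrightarrow> strict_mono_on {wl..wh} (\<lambda>x. x - \<gamma> * U x)"
  by (rule strict_mono_on_diff_scaled_lipschitz[OF Upsilon_lipschitz])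

lemma wR_0: "W 0 \<in> {wl..wh} \<and> W 0 = z * (1 - \<beta>) + \<beta> * U (W 0)"
proof -
  have "\<exists>!x. x \<in> {wl..wh} \<and> x = z * (1 - \<beta>) + \<beta> * U x"
  proof (rule ex1_fixed_point_contraction[OF Upsilon_lipschitz _ _ wl_le_wh])
    show "0 \<le> \<beta>" "\<beta> < 1"
      using beta by auto
    show "wl \<le> z * (1 - \<beta>) + \<beta> * U wl"
      using low by (simp add: algebra_simps)
    show "z * (1 - \<beta>) + \<beta> * U wh \<le> wh"
      using income_less_wh benefit_flow_pos Upsilon_upper by (simp add: algebra_simps)
  qed
  then show ?thesis
    unfolding wR.simps by (rule theI')
qed

lemma
  shows wR_strict_mono: "strict_mono W" and wR_in_support: "W n \<in> {wl..wh}"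
proof -
  define T where "T x = (z + c) * (1 - \<beta>) + \<beta> * U x" for x
  have step: "W (Suc n) = T (W n)" for n
    by (simp add: T_def)
  have "strict_mono_on {wl..wh} T"
    using strict_mono_onD[OF Upsilon_strict_mono] beta
    by (intro strict_mono_onI) (simp add: T_def)
  moreover have "T ` {wl..wh} \<subseteq> {wl..wh}"
  proof
    fix y assume "y \<in> T ` {wl..wh}"
    then obtain x where x: "x \<in> {wl..wh}" and y: "y = T x"
      by auto
    have "\<beta> * U wl \<le> \<beta> * U x" "\<beta> * U x \<le> \<beta> * wh"
      using Upsilon_bounds[OF x] beta by simp_all
    then show "y \<in> {wl..wh}"
      using y low income_less_wh benefit_flow_pos by (simp add: T_def algebra_simps)
  qed
  moreover have "W 0 < W 1"
    using wR_0 benefit_flow_pos by (simp add: algebra_simps)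
  ultimately show "strict_mono W" "W n \<in> {wl..wh}"
    using strict_mono_orbit[of W T, OF step] orbit_in_set[of W T, OF step] wR_0 by blast+
qed

lemma weight_bounds:
  assumes "0 < \<delta>" "\<delta> < 1"
  shows "0 \<le> \<beta> * (1 - \<delta>)" "\<beta> * (1 - \<delta>) < 1"
  using assms beta mult_strict_mono[of \<beta> 1 "1 - \<delta>" 1] by auto

context
  fixes \<delta> :: real and D :: nat
  assumes delta: "0 < \<delta>" "\<delta> < 1" and D_pos: "0 < D"
begin

lemma wRd_0:
  "Wd \<delta> D 0 \<in> {wl..wh} \<and>
   Wd \<delta> D 0 = z * (1 - \<beta>) + \<beta> * \<delta> * U (W D) + \<beta> * (1 - \<delta>) * U (Wd \<delta> D 0)"
proof -
  have UW: "U wl \<le> U (W D)" "U (W D) \<le> wh"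
    using Upsilon_bounds wR_in_support by auto
  have "\<exists>!x. x \<in> {wl..wh} \<and> x = z * (1 - \<beta>) + \<beta> * \<delta> * U (W D) + \<beta> * (1 - \<delta>) * U x"
  proof (rule ex1_fixed_point_contraction[OF Upsilon_lipschitz weight_bounds[OF delta] wl_le_wh])
    have "\<beta> * \<delta> * U wl \<le> \<beta> * \<delta> * U (W D)"
      using UW beta delta by simp
    then show "wl \<le> z * (1 - \<beta>) + \<beta> * \<delta> * U (W D) + \<beta> * (1 - \<delta>) * U wl"
      using low by (simp add: algebra_simps)
    have "\<beta> * \<delta> * U (W D) \<le> \<beta> * \<delta> * wh"
      using UW beta delta by simp
    then show "z * (1 - \<beta>) + \<beta> * \<delta> * U (W D) + \<beta> * (1 - \<delta>) * U wh \<le> wh"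
      using Upsilon_upper income_less_wh benefit_flow_pos by (simp add: algebra_simps)
  qed
  then show ?thesis
    unfolding wRd.simps by (rule theI')
qed

lemma wRd_less_wR: "wl \<le> Wd \<delta> D n \<and> Wd \<delta> D n < W (n + D)"
proof (induction n)
  case 0
  let ?x = "Wd \<delta> D 0" and ?g = "\<lambda>x. x - \<beta> * (1 - \<delta>) * U x"
  have "W 0 - \<beta> * U (W 0) < W D - \<beta> * U (W D)"
    by (rule strict_mono_onD[OF strict_mono_on_diff_Upsilon])
      (use beta wR_in_support[of 0] wR_in_support[of D] strict_monoD[OF wR_strict_mono D_pos] in auto)
  moreover have "\<beta> * (1 - \<delta>) * U (W D) = \<beta> * U (W D) - \<beta> * \<delta> * U (W D)"
    by (simp add: algebra_simps)
  ultimately have "?g ?x < ?g (W D)"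
    using wR_0[THEN conjunct2] wRd_0[THEN conjunct2] by linarith
  then show ?case
    using strict_mono_on_less[OF strict_mono_on_diff_Upsilon[OF weight_bounds[OF delta]]] wRd_0 wR_in_support by auto
next
  case (Suc n)
  let ?y = "Wd \<delta> D n" and ?a = "W (n + D)"
  have y: "?y \<in> {wl..wh}" and a: "?a \<in> {wl..wh}"
    using Suc.IH wR_in_support[of "n + D"] by auto
  have "U ?y < U ?a"
    using strict_mono_onD[OF Upsilon_strict_mono y a] Suc.IH by simp
  then have "\<beta> * (1 - \<delta>) * U ?y < \<beta> * (1 - \<delta>) * U ?a"
    using beta delta by simp
  moreover have "\<beta> * (1 - \<delta>) * U wl \<le> \<beta> * (1 - \<delta>) * U ?y"
    and "\<beta> * \<delta> * U wl \<le> \<beta> * \<delta> * U ?a"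
    using Upsilon_bounds y a beta delta by simp_all
  ultimately show ?case
    using low benefit_flow_pos by (simp add: algebra_simps)
qed

lemma wRd_in_support: "Wd \<delta> D n \<in> {wl..wh}"
  using wRd_less_wR[of n] wR_in_support[of "n + D"] by auto

end

lemma wRd_strict_mono_delta:
  assumes "0 < \<delta>1" "\<delta>1 < \<delta>2" "\<delta>2 < 1" and D: "0 < D"
  shows "Wd \<delta>1 D n < Wd \<delta>2 D n"
proof -
  have \<delta>1: "0 < \<delta>1" "\<delta>1 < 1" and \<delta>2: "0 < \<delta>2" "\<delta>2 < 1" and "0 < \<delta>2 - \<delta>1"
    using assms by auto
  show ?thesis
  proof (induction n)
    case 0
    let ?x1 = "Wd \<delta>1 D 0" and ?x2 = "Wd \<delta>2 D 0" and ?A = "U (W D)"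
    have "U ?x1 < ?A"
      using strict_mono_onD[OF Upsilon_strict_mono] wRd_in_support[OF \<delta>1 D] wR_in_support
        wRd_less_wR[OF \<delta>1 D, of 0] by simp
    then have "\<beta> * (\<delta>2 - \<delta>1) * U ?x1 < \<beta> * (\<delta>2 - \<delta>1) * ?A"
      using beta \<open>0 < \<delta>2 - \<delta>1\<close> by simp
    moreover have "\<beta> * (1 - \<delta>1) * U ?x1 = \<beta> * (1 - \<delta>2) * U ?x1 + \<beta> * (\<delta>2 - \<delta>1) * U ?x1"
      and "\<beta> * \<delta>2 * ?A = \<beta> * \<delta>1 * ?A + \<beta> * (\<delta>2 - \<delta>1) * ?A"
      by (simp_all add: algebra_simps)
    ultimately have "?x1 - \<beta> * (1 - \<delta>2) * U ?x1 < ?x2 - \<beta> * (1 - \<delta>2) * U ?x2"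
      using wRd_0[OF \<delta>1 D, THEN conjunct2] wRd_0[OF \<delta>2 D, THEN conjunct2] by linarith
    then show ?case
      using strict_mono_on_less[OF strict_mono_on_diff_Upsilon[OF weight_bounds[OF \<delta>2]]]
        wRd_in_support[OF \<delta>1 D] wRd_in_support[OF \<delta>2 D] by blast
  next
    case (Suc n)
    let ?y1 = "Wd \<delta>1 D n" and ?y2 = "Wd \<delta>2 D n" and ?a = "W (n + D)"
    have y1: "?y1 \<in> {wl..wh}" and y2: "?y2 \<in> {wl..wh}" and a: "?a \<in> {wl..wh}"
      using wRd_in_support[OF \<delta>1 D] wRd_in_support[OF \<delta>2 D] wR_in_support by blast+
    have "U ?y1 < U ?a"
      using strict_mono_onD[OF Upsilon_strict_mono y1 a] wRd_less_wR[OF \<delta>1 D] by blast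
    then have "0 < \<beta> * (\<delta>2 - \<delta>1) * (U ?a - U ?y1)"
      using beta \<open>0 < \<delta>2 - \<delta>1\<close> by simp
    moreover have "0 \<le> \<beta> * (1 - \<delta>2) * (U ?y2 - U ?y1)"
      using strict_mono_on_leD[OF Upsilon_strict_mono y1 y2] Suc.IH beta \<delta>2 by simp
    moreover have "Wd \<delta>2 D (Suc n) - Wd \<delta>1 D (Suc n)
        = \<beta> * (\<delta>2 - \<delta>1) * (U ?a - U ?y1) + \<beta> * (1 - \<delta>2) * (U ?y2 - U ?y1)"
      by (simp add: algebra_simps)
    ultimately show ?case
      by linarith
  qed
qed

lemma wRd_strict_mono_Delta:
  assumes \<delta>: "0 < \<delta>" "\<delta> < 1" and D1: "0 < D1" and "D1 < D2"
  shows "Wd \<delta> D1 n < Wd \<delta> D2 n"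
proof -
  have D2: "0 < D2"
    using assms by simp
  show ?thesis
  proof (induction n)
    case 0
    let ?x1 = "Wd \<delta> D1 0" and ?x2 = "Wd \<delta> D2 0"
    have "U (W D1) < U (W D2)"
      using strict_mono_onD[OF Upsilon_strict_mono wR_in_support wR_in_support]
        strict_monoD[OF wR_strict_mono \<open>D1 < D2\<close>] .
    then have "\<beta> * \<delta> * U (W D1) < \<beta> * \<delta> * U (W D2)"
      using beta \<delta> by simp
    then have "?x1 - \<beta> * (1 - \<delta>) * U ?x1 < ?x2 - \<beta> * (1 - \<delta>) * U ?x2"
      using wRd_0[OF \<delta> D1, THEN conjunct2] wRd_0[OF \<delta> D2, THEN conjunct2] by linarith
    then show ?case
      using strict_mono_on_less[OF strict_mono_on_diff_Upsilon[OF weight_bounds[OF \<delta>]]]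
        wRd_in_support[OF \<delta> D1] wRd_in_support[OF \<delta> D2] by blast
  next
    case (Suc n)
    let ?y1 = "Wd \<delta> D1 n" and ?y2 = "Wd \<delta> D2 n"
    have y1: "?y1 \<in> {wl..wh}" and y2: "?y2 \<in> {wl..wh}"
      using wRd_in_support[OF \<delta> D1] wRd_in_support[OF \<delta> D2] by blast+
    have "U (W (n + D1)) < U (W (n + D2))"
      using strict_mono_onD[OF Upsilon_strict_mono wR_in_support wR_in_support]
        strict_monoD[OF wR_strict_mono] \<open>D1 < D2\<close> by simp
    then have "0 < \<beta> * \<delta> * (U (W (n + D2)) - U (W (n + D1)))"
      using beta \<delta> by simp
    moreover have "0 \<le> \<beta> * (1 - \<delta>) * (U ?y2 - U ?y1)"
      using strict_mono_on_leD[OF Upsilon_strict_mono y1 y2] Suc.IH beta \<delta> by simp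
    moreover have "Wd \<delta> D2 (Suc n) - Wd \<delta> D1 (Suc n)
        = \<beta> * \<delta> * (U (W (n + D2)) - U (W (n + D1))) + \<beta> * (1 - \<delta>) * (U ?y2 - U ?y1)"
      by (simp add: algebra_simps)
    ultimately show ?case
      by linarith
  qed
qed

end

lemma (in real_distribution_on) reservation_wage_model_if_atomless:
  assumes atomless: "\<And>x. measure M {x} = 0"
    and "wl \<le> wh" "0 < \<beta>" "\<beta> < 1" "0 < c"
    and low: "wl < (1 - \<beta>) * z + \<beta> * expectation (\<lambda>w. w)" and "z + c < wh"
  shows "reservation_wage_model M wl wh \<beta> z c"
proof -
  have Upsilon_eq: "Upsilon M wl wh = (\<lambda>x. expectation (\<lambda>w. max x w))"
    using atomless by (intro ext Upsilon_eq_expectation_max)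
  show ?thesis
  proof
    show "strict_mono_on {wl..wh} (Upsilon M wl wh)"
      unfolding Upsilon_eq by (rule strict_mono_on_expectation_max)
    show "1-lipschitz_on {wl..wh} (Upsilon M wl wh)"
      unfolding Upsilon_eq by (rule lipschitz_on_subset[OF lipschitz_expectation_max]) simp
    show "Upsilon M wl wh wh = wh"
      unfolding Upsilon_eq by (rule expectation_max_upper)
    show "wl < (1 - \<beta>) * z + \<beta> * Upsilon M wl wh wl"
      unfolding Upsilon_eq using expectation_max_lower low by simp
  qed (use assms in auto)
qed

theorem proposition3:
  fixes M :: "real measure" and wl wh \<beta> z c \<delta> :: real and N \<Delta> :: nat
  assumes dist: "real_distribution M"
    and Fcont: "continuous_on UNIV (cdf M)"
    and support: "\<forall>x. x \<in> {wl..wh} \<longleftrightarrow> (\<forall>e>0. measure M {x - e<..<x + e} > 0)"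
    and wlwh: "wl < wh"
    and beta: "0 < \<beta>" "\<beta> < 1"
    and zpos: "0 < z" and cpos: "0 < c"
    and delta: "0 < \<delta>" "\<delta> < 1"
    and Npos: "0 < N" and Dpos: "0 < \<Delta>"
    and low: "wl < (1 - \<beta>) * z + \<beta> * (LINT w|M. w)"
    and high: "z + c < wh"
  shows "\<forall>n \<le> N.
     (\<forall>\<delta>1 \<delta>2. 0 < \<delta>1 \<longrightarrow> \<delta>1 < \<delta>2 \<longrightarrow> \<delta>2 < 1 \<longrightarrow>
        wRd M wl wh \<beta> z c \<delta>1 \<Delta> n < wRd M wl wh \<beta> z c \<delta>2 \<Delta> n) \<and>
     (\<forall>\<Delta>1 \<Delta>2. 0 < \<Delta>1 \<longrightarrow> \<Delta>1 < \<Delta>2 \<longrightarrow>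
        wRd M wl wh \<beta> z c \<delta> \<Delta>1 n < wRd M wl wh \<beta> z c \<delta> \<Delta>2 n)"
proof -
  interpret real_distribution_on M wl wh
    using dist support by (simp add: real_distribution_on_def real_distribution_on_axioms_def)
  have "measure M {x} = 0" for x
    using Fcont by (simp add: isCont_cdf[symmetric] continuous_on_eq_continuous_at)
  then interpret reservation_wage_model M wl wh \<beta> z c
    using wlwh beta cpos low high by (intro reservation_wage_model_if_atomless) auto
  show ?thesis
    using wRd_strict_mono_delta[OF _ _ _ Dpos] wRd_strict_mono_Delta[OF delta] by blast
qed

end
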